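(* Consider a linearly separable training set $\{(\mathbf{x}_i,y_i)\}_{i=1}^N$, $\mathbf{x}_i\in\mathbb{R}^n$, $y_i\in\{-1,1\}$, whose maximum-margin separating hyperplane passes through the origin, and train a linear model with learnable bias by gradient descent (small step size $\eta$, approximated by gradient flow) on the exponential loss $\mathcal{L}(\mathbf{w},b)=\sum_{i=1}^N e^{-y_i(\mathbf{w}^T\mathbf{x}_i+b)}$. Suppose the weight iterates satisfy $\mathbf{w}(t)=\hat{\mathbf{w}}\log t+\boldsymbol\rho(t)$ with $\|\boldsymbol\rho(t)\|$ bounded and $\boldsymbol\rho(t)\to\tilde{\mathbf{w}}$, where $\hat{\mathbf{w}}$ is the hard-margin SVM weight vector (so $y_i\hat{\mathbf{w}}^T\mathbf{x}_i=1$ on support vectors), the support vectors span the dataset, $\hat{\mathbf{w}}=\sum_{i\in\mathcal{S}}\alpha_i\mathbf{x}_{s,i}$, and $\tilde{\mathbf{w}}$ satisfies $\eta\exp(-\mathbf{x}_{s,i}^T\tilde{\mathbf{w}})=\alpha_i$ for each support vector. Let $\mathcal{S}^+$, $\mathcal{S}^-$ be the support vectors of class $+1$ and $-1$ respectively, and define $A_S^+=\sum_{i\in\mathcal{S}^+}\exp(-\tilde{\mathbf{w}}^T\mathbf{x}_i)$, $A_S^-=\sum_{i\in\mathcal{S}^-}\exp(\tilde{\mathbf{w}}^T\mathbf{x}_i)$, $\delta=\sqrt{A_S^-/A_S^+}$, and $g(t)=2\sqrt{A_S^+A_S^-}\log(t/t_0)$, where $t_0$ is a constant (the time at which the late-time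 dynamics begin). If the bias is initialized at $0$, then the late-time gradient flow dynamics of the bias follow $$\frac{db}{dt}=\frac{1}{t}\left(A_S^+e^{-b}-A_S^-e^{b}\right),$$ and integrating, $$b(t)=\log\left(\frac{(1+\delta)\exp(g(t))-(1-\delta)}{(1+\delta)\exp(g(t))+(1-\delta)}\right)-\log\delta .$$ Consequently $b(t)$ converges to $b_\infty=-\log\delta$.
   Context: Support vectors are the training points $\mathbf{x}_{s,i}$ with $y_i(\mathbf{w}_{SVM}^T\mathbf{x}_i+b_{SVM})=1$, where $(\mathbf{w}_{SVM},b_{SVM})$ is the minimum-norm solution of $y_i(\mathbf{w}^T\mathbf{x}_i+b)\ge 1$ for all $i$; by assumption $b_{SVM}=0$. "Late-time dynamics" refers to times $t\ge t_0$ at which $\boldsymbol\rho(t)$ may be replaced by its limit $\tilde{\mathbf{w}}$ and only support vectors contribute to the loss gradient. *)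

theory Defs
  imports "HOL-Analysis.Analysis"
begin

definition svm_feasible :: "nat \<Rightarrow> (nat \<Rightarrow> real^'n) \<Rightarrow> (nat \<Rightarrow> real) \<Rightarrow> real^'n \<Rightarrow> real \<Rightarrow> bool" where
  "svm_feasible N x y w b \<longleftrightarrow> (\<forall>i<N. y i * (w \<bullet> x i + b) \<ge> 1)"

definition is_hard_margin_svm :: "nat \<Rightarrow> (nat \<Rightarrow> real^'n) \<Rightarrow> (nat \<Rightarrow> real) \<Rightarrow> real^'n \<Rightarrow> real \<Rightarrow> bool" where
  "is_hard_margin_svm N x y w b \<longleftrightarrow>
     svm_feasible N x y w b \<and> (\<forall>w' b'. svm_feasible N x y w' b' \<longrightarrow> norm w \<le> norm w')"

definition support_vectors :: "nat \<Rightarrow> (nat \<Rightarrow> real^'n) \<Rightarrow> (nat \<Rightarrow> real) \<Rightarrow> real^'n \<Rightarrow> real \<Rightarrow> nat set" where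
  "support_vectors N x y w b = {i. i < N \<and> y i * (w \<bullet> x i + b) = 1}"

text \<open>Negative partial derivative of the exponential loss with respect to the bias,
  restricted to an index set I (late time: only support vectors contribute).\<close>
definition neg_dL_db :: "nat set \<Rightarrow> (nat \<Rightarrow> real^'n) \<Rightarrow> (nat \<Rightarrow> real) \<Rightarrow> real^'n \<Rightarrow> real \<Rightarrow> real" where
  "neg_dL_db I x y w b = (\<Sum>i\<in>I. y i * exp (- (y i * (w \<bullet> x i + b))))"

definition A_plus :: "nat set \<Rightarrow> (nat \<Rightarrow> real^'n) \<Rightarrow> (nat \<Rightarrow> real) \<Rightarrow> real^'n \<Rightarrow> real" where
  "A_plus S x y wt = (\<Sum>i\<in>{i\<in>S. y i = 1}. exp (- (wt \<bullet> x i)))"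

definition A_minus :: "nat set \<Rightarrow> (nat \<Rightarrow> real^'n) \<Rightarrow> (nat \<Rightarrow> real) \<Rightarrow> real^'n \<Rightarrow> real" where
  "A_minus S x y wt = (\<Sum>i\<in>{i\<in>S. y i = -1}. exp (wt \<bullet> x i))"

end

theory Submission
  imports Defs "HOL-Real_Asymp.Real_Asymp"
begin

text \<open>On a support vector \<open>y\<^sub>i w_hat \<bullet> x\<^sub>i = 1\<close>, so the part \<open>ln t w_hat\<close> of the weights
  contributes exactly a factor \<open>1/t\<close> to each summand of the bias gradient.  Each class
  contains a support vector (otherwise shifting the bias towards the other class and
  shrinking would give a feasible pair of smaller norm), so \<open>A\<^sub>S\<^sup>+\<close> and \<open>A\<^sub>S\<^sup>-\<close> are positive.
  Substituting \<open>u = \<delta> e\<^sup>b\<close> turns the bias equation into the Riccati equation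
  \<open>u' = (k/t)(1 - u\<^sup>2)\<close> with \<open>k = sqrt (A\<^sub>S\<^sup>+ A\<^sub>S\<^sup>-)\<close>, which conserves
  \<open>(1 - u)/(1 + u) (t/t0)\<^bsup>2k\<^esup>\<close>; solving for \<open>u\<close> gives the closed form, and \<open>u \<rightarrow> 1\<close> gives
  \<open>b \<rightarrow> -ln \<delta>\<close>.\<close>

lemma svm_feasible_shift_shrink:
  fixes x :: "nat \<Rightarrow> real^'n" and y :: "nat \<Rightarrow> real" and s \<epsilon> :: real
  assumes labels: "\<forall>i<N. y i = 1 \<or> y i = -1" and s: "s = 1 \<or> s = -1" and \<epsilon>: "\<epsilon> > 0"
    and margin: "\<forall>i<N. y i * (w \<bullet> x i) \<ge> 1"
    and margin_s: "\<forall>i<N. y i = s \<longrightarrow> y i * (w \<bullet> x i) \<ge> 1 + \<epsilon>"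
  shows "svm_feasible N x y ((1 / (1 + \<epsilon> / 2)) *\<^sub>R w) (1 / (1 + \<epsilon> / 2) * (- s * \<epsilon> / 2))"
  unfolding svm_feasible_def
proof (intro allI impI)
  fix i assume i: "i < N"
  have "y i * (w \<bullet> x i - s * \<epsilon> / 2) \<ge> 1 + \<epsilon> / 2"
  proof (cases "y i = s")
    case True
    then show ?thesis using i margin_s s by (auto simp: algebra_simps)
  next
    case False
    then have "y i = - s" using labels i s by auto
    then show ?thesis using margin i s by (auto simp: algebra_simps)
  qed
  then have "1 / (1 + \<epsilon> / 2) * (y i * (w \<bullet> x i - s * \<epsilon> / 2)) \<ge> 1"
    using \<epsilon> by (simp add: field_simps)
  then show "y i * ((1 / (1 + \<epsilon> / 2)) *\<^sub>R w \<bullet> x i + 1 / (1 + \<epsilon> / 2) * (- s * \<epsilon> / 2)) \<ge> 1"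
    by (simp add: algebra_simps)
qed

lemma hard_margin_svm_support_vector_in_class:
  fixes x :: "nat \<Rightarrow> real^'n" and y :: "nat \<Rightarrow> real" and s :: real
  assumes labels: "\<forall>i<N. y i = 1 \<or> y i = -1" and s: "s = 1 \<or> s = -1"
    and class_nonempty: "\<exists>i<N. y i = s" and svm: "is_hard_margin_svm N x y w 0"
  shows "\<exists>i\<in>support_vectors N x y w 0. y i = s"
proof (rule ccontr)
  assume no_sv: "\<not> ?thesis"
  define P where "P = {i. i < N \<and> y i = s}"
  have P: "finite P" "P \<noteq> {}" using class_nonempty unfolding P_def by auto
  have margin: "\<forall>i<N. y i * (w \<bullet> x i) \<ge> 1"
    using svm unfolding is_hard_margin_svm_def svm_feasible_def by simp
  have strict: "\<forall>i\<in>P. y i * (w \<bullet> x i) > 1"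
    using no_sv margin unfolding support_vectors_def P_def by force
  define \<epsilon> where "\<epsilon> = Min ((\<lambda>i. y i * (w \<bullet> x i) - 1) ` P)"
  have \<epsilon>: "\<epsilon> > 0" using P strict by (simp add: \<epsilon>_def)
  have "\<forall>i\<in>P. \<epsilon> \<le> y i * (w \<bullet> x i) - 1"
    using P unfolding \<epsilon>_def by auto
  then have "\<forall>i<N. y i = s \<longrightarrow> y i * (w \<bullet> x i) \<ge> 1 + \<epsilon>" by (auto simp: P_def)
  then have "norm w \<le> norm ((1 / (1 + \<epsilon> / 2)) *\<^sub>R w)"
    using svm svm_feasible_shift_shrink[OF labels s \<epsilon> margin]
    unfolding is_hard_margin_svm_def by blast
  also have "\<dots> = norm w / (1 + \<epsilon> / 2)" using \<epsilon> by simp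
  finally have "w = 0" using \<epsilon> by (simp add: field_simps mult_le_0_iff)
  then show False using margin class_nonempty by force
qed

lemma A_plus_support_vectors_pos:
  fixes x :: "nat \<Rightarrow> real^'n" and y :: "nat \<Rightarrow> real"
  assumes "\<forall>i<N. y i = 1 \<or> y i = -1" "\<exists>i<N. y i = 1" "is_hard_margin_svm N x y w 0"
  shows "A_plus (support_vectors N x y w 0) x y wt > 0"
proof -
  have "finite (support_vectors N x y w 0)" unfolding support_vectors_def by auto
  moreover have "\<exists>i\<in>support_vectors N x y w 0. y i = 1"
    by (rule hard_margin_svm_support_vector_in_class) (use assms in auto)
  ultimately show ?thesis unfolding A_plus_def by (intro sum_pos) auto
qed

lemma A_minus_support_vectors_pos:
  fixes x :: "nat \<Rightarrow> real^'n" and y :: "nat \<Rightarrow> real"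
  assumes "\<forall>i<N. y i = 1 \<or> y i = -1" "\<exists>i<N. y i = -1" "is_hard_margin_svm N x y w 0"
  shows "A_minus (support_vectors N x y w 0) x y wt > 0"
proof -
  have "finite (support_vectors N x y w 0)" unfolding support_vectors_def by auto
  moreover have "\<exists>i\<in>support_vectors N x y w 0. y i = -1"
    by (rule hard_margin_svm_support_vector_in_class) (use assms in auto)
  ultimately show ?thesis unfolding A_minus_def by (intro sum_pos) auto
qed

lemma neg_dL_db_support_vectors:
  fixes N :: nat and x :: "nat \<Rightarrow> real^'n" and y :: "nat \<Rightarrow> real" and w wt :: "real^'n"
    and t B :: real
  defines "S \<equiv> support_vectors N x y w 0"
  assumes labels: "\<forall>i<N. y i = 1 \<or> y i = -1" and t: "t > 0"
  shows "neg_dL_db S x y (ln t *\<^sub>R w + wt) B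
      = 1 / t * (A_plus S x y wt * exp (- B) - A_minus S x y wt * exp B)"
proof -
  define Sp where "Sp = {i\<in>S. y i = 1}"
  define Sm where "Sm = {i\<in>S. y i = -1}"
  have "finite S" unfolding S_def support_vectors_def by auto
  then have fin: "finite Sp" "finite Sm" unfolding Sp_def Sm_def by auto
  have S_split: "S = Sp \<union> Sm" "Sp \<inter> Sm = {}"
    using labels unfolding Sp_def Sm_def S_def support_vectors_def by auto
  have plus: "y i * exp (- (y i * ((ln t *\<^sub>R w + wt) \<bullet> x i + B)))
      = 1 / t * (exp (- (wt \<bullet> x i)) * exp (- B))" if "i \<in> Sp" for i
  proof -
    have "y i = 1" "w \<bullet> x i = 1" using that unfolding Sp_def S_def support_vectors_def by auto
    then show ?thesis using t by (simp add: inner_add_left exp_add exp_diff exp_minus field_simps)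
  qed
  have minus: "y i * exp (- (y i * ((ln t *\<^sub>R w + wt) \<bullet> x i + B)))
      = - (1 / t * (exp (wt \<bullet> x i) * exp B))" if "i \<in> Sm" for i
  proof -
    have "y i = -1" "w \<bullet> x i = -1" using that unfolding Sm_def S_def support_vectors_def by auto
    then show ?thesis using t by (simp add: inner_add_left exp_add exp_diff exp_minus field_simps)
  qed
  have "neg_dL_db S x y (ln t *\<^sub>R w + wt) B
      = (\<Sum>i\<in>Sp. 1 / t * (exp (- (wt \<bullet> x i)) * exp (- B)))
        + (\<Sum>i\<in>Sm. - (1 / t * (exp (wt \<bullet> x i) * exp B)))"
    unfolding neg_dL_db_def S_split(1) using plus minus fin S_split(2)
    by (simp add: sum.union_disjoint)
  also have "\<dots> = 1 / t * (A_plus S x y wt * exp (- B) - A_minus S x y wt * exp B)"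
    unfolding A_plus_def A_minus_def Sp_def Sm_def
    by (simp add: sum_distrib_left sum_distrib_right sum_negf right_diff_distrib)
  finally show ?thesis .
qed

lemma exp_bias_flow_riccati:
  fixes b :: "real \<Rightarrow> real" and A C t :: real
  defines "\<delta> \<equiv> sqrt (C / A)"
  assumes A: "A > 0" and C: "C \<ge> 0"
    and deriv: "(b has_real_derivative 1 / t * (A * exp (- b t) - C * exp (b t))) (at t within T)"
  shows "((\<lambda>s. \<delta> * exp (b s)) has_real_derivative
           sqrt (A * C) / t * (1 - (\<delta> * exp (b t))\<^sup>2)) (at t within T)"
proof -
  have \<delta>A: "\<delta> * A = sqrt (A * C)" and C_eq: "C = \<delta>\<^sup>2 * A"
    using A C unfolding \<delta>_def by (auto simp: real_sqrt_divide real_sqrt_mult field_simps)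
  have "((\<lambda>s. \<delta> * exp (b s)) has_real_derivative
      \<delta> * (exp (b t) * (1 / t * (A * exp (- b t) - C * exp (b t))))) (at t within T)"
    by (intro DERIV_cmult DERIV_chain2[OF DERIV_exp] deriv)
  moreover have "\<delta> * (exp (b t) * (1 / t * (A * exp (- b t) - C * exp (b t))))
      = \<delta> * A / t * (1 - (\<delta> * exp (b t))\<^sup>2)"
    unfolding C_eq by (cases "t = 0") (simp_all add: exp_minus field_simps power2_eq_square)
  ultimately show ?thesis unfolding \<delta>A by (rule DERIV_cong)
qed

lemma riccati_invariant:
  fixes u :: "real \<Rightarrow> real" and k t0 :: real
  assumes t0: "t0 > 0"
    and u_gt: "\<forall>t\<ge>t0. u t > -1"
    and deriv: "\<forall>t\<ge>t0. (u has_real_derivative k / t * (1 - (u t)\<^sup>2)) (at t within {t0..})"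
  shows "\<forall>t\<ge>t0. (1 - u t) / (1 + u t) * exp (2 * k * ln (t / t0)) = (1 - u t0) / (1 + u t0)"
proof -
  define E where "E t = exp (2 * k * ln (t / t0))" for t
  define \<Phi> where "\<Phi> t = (1 - u t) / (1 + u t) * E t" for t
  have "(\<Phi> has_real_derivative 0) (at t within {t0..})" if "t \<in> {t0..}" for t
  proof -
    have t: "t \<ge> t0" "t > 0" using that t0 by auto
    have u: "1 + u t \<noteq> 0" using u_gt t by force
    have dE: "(E has_real_derivative 2 * k / t * E t) (at t within {t0..})"
      unfolding E_def using t t0 by (auto intro!: derivative_eq_intros simp: field_simps)
    have dq: "((\<lambda>t. (1 - u t) / (1 + u t)) has_real_derivative
        - 2 * k / t * (1 - u t) / (1 + u t)) (at t within {t0..})"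
      by (rule derivative_eq_intros deriv[rule_format, OF t(1)] refl u)+
        (use t u in \<open>simp add: divide_simps power2_eq_square, algebra\<close>)
    show ?thesis unfolding \<Phi>_def
      by (rule DERIV_cong[OF DERIV_mult[OF dq dE]]) simp
  qed
  then obtain c where c: "\<forall>t\<in>{t0..}. \<Phi> t = c"
    using has_field_derivative_zero_constant[of "{t0..}" \<Phi>] by auto
  show ?thesis
  proof (intro allI impI)
    fix t assume "t \<ge> t0"
    then have "\<Phi> t = \<Phi> t0" using c by auto
    also have "\<Phi> t0 = (1 - u t0) / (1 + u t0)" using t0 by (simp add: \<Phi>_def E_def)
    finally show "(1 - u t) / (1 + u t) * exp (2 * k * ln (t / t0)) = (1 - u t0) / (1 + u t0)"
      by (simp add: \<Phi>_def E_def)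
  qed
qed

lemma riccati_invariant_solve:
  fixes v \<delta> E :: real
  assumes v: "v > 0" and \<delta>: "\<delta> > 0" and E: "E > 0"
    and invariant: "(1 - v) / (1 + v) * E = (1 - \<delta>) / (1 + \<delta>)"
  shows "v = ((1 + \<delta>) * E - (1 - \<delta>)) / ((1 + \<delta>) * E + (1 - \<delta>))"
proof -
  have "(1 + \<delta>) * (1 - v) * E = (1 - \<delta>) * (1 + v)"
    using invariant v \<delta> by (simp add: field_simps)
  then have eq: "v * ((1 + \<delta>) * E + (1 - \<delta>)) = (1 + \<delta>) * E - (1 - \<delta>)"
    by (simp add: algebra_simps)
  moreover have "(1 + \<delta>) * E + (1 - \<delta>) \<noteq> 0"
  proof
    assume "(1 + \<delta>) * E + (1 - \<delta>) = 0"
    with eq have "(1 + \<delta>) * E = 0" by simp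
    with \<delta> E show False by simp
  qed
  ultimately show ?thesis by (simp add: field_simps)
qed

lemma bias_flow_closed_form:
  fixes b :: "real \<Rightarrow> real" and A C t0 :: real
  defines "\<delta> \<equiv> sqrt (C / A)"
  assumes A: "A > 0" and C: "C > 0" and t0: "t0 > 0" and b_init: "b t0 = 0"
    and deriv: "\<forall>t\<ge>t0. (b has_real_derivative 1 / t * (A * exp (- b t) - C * exp (b t)))
                   (at t within {t0..})"
  shows "\<forall>t\<ge>t0. b t = ln (((1 + \<delta>) * exp (2 * sqrt (A * C) * ln (t / t0)) - (1 - \<delta>))
                           / ((1 + \<delta>) * exp (2 * sqrt (A * C) * ln (t / t0)) + (1 - \<delta>))) - ln \<delta>"
proof (intro allI impI)
  fix t assume t: "t \<ge> t0"
  define u where "u s = \<delta> * exp (b s)" for s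
  have \<delta>: "\<delta> > 0" using A C by (simp add: \<delta>_def)
  have u_pos: "u s > 0" for s unfolding u_def using \<delta> by simp
  have "\<forall>s\<ge>t0. (u has_real_derivative sqrt (A * C) / s * (1 - (u s)\<^sup>2)) (at s within {t0..})"
    using exp_bias_flow_riccati[OF A less_imp_le[OF C]] deriv unfolding u_def \<delta>_def by blast
  then have "\<forall>s\<ge>t0. (1 - u s) / (1 + u s) * exp (2 * sqrt (A * C) * ln (s / t0))
      = (1 - u t0) / (1 + u t0)"
    by (rule riccati_invariant[OF t0, rotated]) (use u_pos in \<open>auto intro: less_trans[of "-1" 0]\<close>)
  moreover have "u t0 = \<delta>" using b_init by (simp add: u_def)
  ultimately have "(1 - u t) / (1 + u t) * exp (2 * sqrt (A * C) * ln (t / t0)) = (1 - \<delta>) / (1 + \<delta>)"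
    using t by simp
  then have "u t = ((1 + \<delta>) * exp (2 * sqrt (A * C) * ln (t / t0)) - (1 - \<delta>))
                 / ((1 + \<delta>) * exp (2 * sqrt (A * C) * ln (t / t0)) + (1 - \<delta>))"
    by (rule riccati_invariant_solve[rotated 3]) (use \<delta> u_pos in simp_all)
  moreover have "ln (u t) = ln \<delta> + b t" using \<delta> by (simp add: u_def ln_mult)
  ultimately show "b t = ln (((1 + \<delta>) * exp (2 * sqrt (A * C) * ln (t / t0)) - (1 - \<delta>))
                           / ((1 + \<delta>) * exp (2 * sqrt (A * C) * ln (t / t0)) + (1 - \<delta>))) - ln \<delta>"
    by simp
qed

lemma bias_closed_form_tendsto:
  fixes \<delta> k t0 :: real
  assumes "\<delta> > 0" "k > 0" "t0 > 0"
  shows "((\<lambda>t. ln (((1 + \<delta>) * exp (2 * k * ln (t / t0)) - (1 - \<delta>))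
                   / ((1 + \<delta>) * exp (2 * k * ln (t / t0)) + (1 - \<delta>))) - ln \<delta>)
          \<longlongrightarrow> - ln \<delta>) at_top"
proof -
  have "filterlim (\<lambda>t. exp (2 * k * ln (t / t0))) at_top at_top"
    using assms by real_asymp
  moreover have "((\<lambda>E. ((1 + \<delta>) * E - (1 - \<delta>)) / ((1 + \<delta>) * E + (1 - \<delta>))) \<longlongrightarrow> 1) at_top"
    using assms by real_asymp
  ultimately have "((\<lambda>t. ((1 + \<delta>) * exp (2 * k * ln (t / t0)) - (1 - \<delta>))
                        / ((1 + \<delta>) * exp (2 * k * ln (t / t0)) + (1 - \<delta>))) \<longlongrightarrow> 1) at_top"
    by (rule filterlim_compose[rotated])
  then have "((\<lambda>t. ln (((1 + \<delta>) * exp (2 * k * ln (t / t0)) - (1 - \<delta>))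
                        / ((1 + \<delta>) * exp (2 * k * ln (t / t0)) + (1 - \<delta>)))) \<longlongrightarrow> ln 1) at_top"
    by (rule tendsto_ln) simp
  then show ?thesis
    using tendsto_diff[OF _ tendsto_const[of "ln \<delta>"]] by fastforce
qed

theorem theorem4p4:
  fixes N :: nat and x :: "nat \<Rightarrow> real^'n" and y :: "nat \<Rightarrow> real"
    and w_hat w_tilde :: "real^'n" and \<alpha> :: "nat \<Rightarrow> real" and \<eta> t0 :: real
    and w \<rho> :: "real \<Rightarrow> real^'n" and b :: "real \<Rightarrow> real"
  defines "S \<equiv> support_vectors N x y w_hat 0"
  defines "Ap \<equiv> A_plus S x y w_tilde"
  defines "Am \<equiv> A_minus S x y w_tilde"
  defines "\<delta> \<equiv> sqrt (Am / Ap)"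
  defines "g \<equiv> (\<lambda>t. 2 * sqrt (Ap * Am) * ln (t / t0))"
  assumes labels: "\<forall>i<N. y i = 1 \<or> y i = -1"
    and both_classes: "\<exists>i<N. y i = 1" "\<exists>i<N. y i = -1"
    and svm: "is_hard_margin_svm N x y w_hat 0"
    and span_S: "x ` {..<N} \<subseteq> span (x ` S)"
    and w_hat_comb: "w_hat = (\<Sum>i\<in>S. \<alpha> i *\<^sub>R x i)"
    and eta_pos: "\<eta> > 0"
    and w_tilde_def: "\<forall>i\<in>S. \<eta> * exp (- (x i \<bullet> w_tilde)) = \<alpha> i"
    and w_decomp: "\<forall>t>0. w t = ln t *\<^sub>R w_hat + \<rho> t"
    and rho_bounded: "bounded (range \<rho>)"
    and rho_lim: "(\<rho> \<longlongrightarrow> w_tilde) at_top"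
    and t0_pos: "t0 > 0"
    and b_init: "b t0 = 0"
    and late_flow: "\<forall>t\<ge>t0. (b has_real_derivative
           neg_dL_db S x y (ln t *\<^sub>R w_hat + w_tilde) (b t)) (at t within {t0..})"
  shows "(\<forall>t\<ge>t0. (b has_real_derivative
           (1 / t) * (Ap * exp (- b t) - Am * exp (b t))) (at t within {t0..}))
       \<and> (\<forall>t\<ge>t0. b t = ln (((1 + \<delta>) * exp (g t) - (1 - \<delta>)) / ((1 + \<delta>) * exp (g t) + (1 - \<delta>)))
                        - ln \<delta>)
       \<and> (b \<longlongrightarrow> - ln \<delta>) at_top"
proof -
  \<comment> \<open>Only \<open>late_flow\<close> and the SVM data enter: \<open>late_flow\<close> already is the late-time bias
    equation, which the hypotheses on \<open>w\<close>, \<open>\<rho>\<close>, \<open>\<alpha>\<close> and \<open>\<eta>\<close> serve to motivate.\<close>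
  have Ap_pos: "Ap > 0"
    unfolding Ap_def S_def using labels both_classes(1) svm by (rule A_plus_support_vectors_pos)
  have Am_pos: "Am > 0"
    unfolding Am_def S_def using labels both_classes(2) svm by (rule A_minus_support_vectors_pos)
  have bias_ode: "\<forall>t\<ge>t0. (b has_real_derivative
      (1 / t) * (Ap * exp (- b t) - Am * exp (b t))) (at t within {t0..})"
  proof (intro allI impI)
    fix t assume t: "t \<ge> t0"
    have "neg_dL_db S x y (ln t *\<^sub>R w_hat + w_tilde) (b t) = 1 / t * (Ap * exp (- b t) - Am * exp (b t))"
      unfolding S_def Ap_def Am_def using t t0_pos by (intro neg_dL_db_support_vectors[OF labels]) simp
    with late_flow t show "(b has_real_derivative
      (1 / t) * (Ap * exp (- b t) - Am * exp (b t))) (at t within {t0..})" by metis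
  qed
  have closed_form: "\<forall>t\<ge>t0. b t = ln (((1 + \<delta>) * exp (g t) - (1 - \<delta>))
      / ((1 + \<delta>) * exp (g t) + (1 - \<delta>))) - ln \<delta>"
    using bias_flow_closed_form[OF Ap_pos Am_pos t0_pos b_init bias_ode] unfolding g_def \<delta>_def .
  have "(b \<longlongrightarrow> - ln \<delta>) at_top"
  proof (rule Lim_transform_eventually)
    show "((\<lambda>t. ln (((1 + \<delta>) * exp (g t) - (1 - \<delta>)) / ((1 + \<delta>) * exp (g t) + (1 - \<delta>))) - ln \<delta>)
            \<longlongrightarrow> - ln \<delta>) at_top"
      unfolding g_def using Ap_pos Am_pos t0_pos
      by (intro bias_closed_form_tendsto) (auto simp: \<delta>_def)
    show "\<forall>\<^sub>F t in at_top. ln (((1 + \<delta>) * exp (g t) - (1 - \<delta>)) / ((1 + \<delta>) * exp (g t) + (1 - \<delta>)))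
            - ln \<delta> = b t"
      using eventually_ge_at_top[of t0] by eventually_elim (simp add: closed_form)
  qed
  with bias_ode closed_form show ?thesis by blast
qed

end
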